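(* Let $A$ be a unital pro-$C^*$-algebra, $H$ a Hilbert space, and $\rho=[\rho_{ij}]_{i,j=1}^n$ a completely $n$-positive linear map from $A$ to $L(H)$. If $\rho_{11},\dots,\rho_{nn}$ are mutually unitarily equivalent pure unital completely positive linear maps from $A$ to $L(H)$, and for all $i,j\in\{1,\dots,n\}$ with $i\ne j$ there is a unitary element $u_{ij}\in A$ such that $\rho_{ij}(u_{ij})=I_H$, then $\rho$ is pure.
   Context: A pro-$C^*$-algebra is a complete Hausdorff topological $*$-algebra over $\mathbb{C}$ whose topology is determined by its continuous $C^*$-seminorms. A representation of $A$ on a Hilbert space $K$ is a continuous $*$-morphism $A\to L(K)$. An $n\times n$ matrix $[\rho_{ij}]$ of continuous linear maps $A\to L(H)$ is completely $n$-positive if the map $M_n(A)\to M_n(L(H))$, $[a_{ij}]\mapsto[\rho_{ij}(a_{ij})]$, is completely positive (for $n=1$ this is an ordinary completely positive map); $\theta\le\rho$ means $\rho-\theta$ is completely $n$-positive. A completely $n$-positive $\rho$ is pure if for every completely $n$-positive $\theta\le\rho$ there is $\alpha\in[0,1]$ with $\theta=\alpha\rho$. Each completely $n$-positive $\rho$ has a Stinespring representation $(\Phi_\rho,H_\rho,V_{\rho,1},\dots,V_{\rho,n})$: $\Phi_\rho$ a representation of $A$ on $H_\rho$, $V_{\rho,i}\in L(H,H_\rho)$, $\rho_{ij}(a)=V_{\rho,i}^*\Phi_\rho(a)V_{\rho,j}$, with $\{\Phi_\rho(a)V_{\rho,i}\xi\}$ spanning a dense subspace; unique up to unitary equivalence.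 Two completely positive maps are unitarily equivalent if their Stinespring representations are unitarily equivalent. A completely positive map $\varphi$ is unital if $\varphi(1)=I_H$. *)

theory Defs
  imports Complex_Main
begin

class cvector = ab_group_add +
  fixes scaleC :: "complex \<Rightarrow> 'a \<Rightarrow> 'a"
  assumes scaleC_add_right: "scaleC c (x + y) = scaleC c x + scaleC c y"
    and scaleC_add_left: "scaleC (c + d) x = scaleC c x + scaleC d x"
    and scaleC_scaleC: "scaleC c (scaleC d x) = scaleC (c * d) x"
    and scaleC_one: "scaleC 1 x = x"

class chilbert = cvector +
  fixes cinner :: "'a \<Rightarrow> 'a \<Rightarrow> complex"
  assumes cinner_add_right: "cinner x (y + z) = cinner x y + cinner x z"
    and cinner_scaleC_right: "cinner x (scaleC c y) = c * cinner x y"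
    and cinner_commute: "cinner y x = cnj (cinner x y)"
    and cinner_nonneg: "0 \<le> Re (cinner x x)"
    and cinner_eq_zero: "cinner x x = 0 \<longleftrightarrow> x = 0"
    and cinner_complete:
      "(\<forall>e>0. \<exists>N::nat. \<forall>m\<ge>N. \<forall>k\<ge>N. sqrt (Re (cinner (X m - X k) (X m - X k))) < e)
        \<Longrightarrow> \<exists>L. \<forall>e>0. \<exists>N::nat. \<forall>k\<ge>N. sqrt (Re (cinner (X k - L) (X k - L))) < e"

class cstar_alg1 = ring_1 + cvector +
  fixes astar :: "'a \<Rightarrow> 'a"
  assumes mult_scaleC_left: "scaleC c x * y = scaleC c (x * y)"
    and mult_scaleC_right: "x * scaleC c y = scaleC c (x * y)"
    and astar_astar: "astar (astar x) = x"
    and astar_add: "astar (x + y) = astar x + astar y"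
    and astar_scaleC: "astar (scaleC c x) = scaleC (cnj c) (astar x)"
    and astar_mult: "astar (x * y) = astar y * astar x"

definition cstar_seminorm :: "('a::cstar_alg1 \<Rightarrow> real) \<Rightarrow> bool" where
  "cstar_seminorm p \<longleftrightarrow>
     (\<forall>x. 0 \<le> p x) \<and>
     (\<forall>x y. p (x + y) \<le> p x + p y) \<and>
     (\<forall>c x. p (scaleC c x) = cmod c * p x) \<and>
     (\<forall>x y. p (x * y) \<le> p x * p y) \<and>
     (\<forall>x. p (astar x * x) = (p x)\<^sup>2)"

text \<open>The topology of the algebra is the one defined by the upward directed
  family P of (continuous) C*-seminorms; it must be Hausdorff and complete
  (completeness expressed with Cauchy filters, equivalent to Cauchy nets).\<close>
definition pro_cstar :: "('a::cstar_alg1 \<Rightarrow> real) set \<Rightarrow> bool" where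
  "pro_cstar P \<longleftrightarrow>
     P \<noteq> {} \<and>
     (\<forall>p\<in>P. cstar_seminorm p) \<and>
     (\<forall>p\<in>P. \<forall>q\<in>P. \<exists>r\<in>P. \<forall>x. max (p x) (q x) \<le> r x) \<and>
     (\<forall>x. (\<forall>p\<in>P. p x = 0) \<longrightarrow> x = 0) \<and>
     (\<forall>F. F \<noteq> bot \<and> (\<forall>p\<in>P. \<forall>e>0. eventually (\<lambda>(x, y). p (x - y) < e) (F \<times>\<^sub>F F))
          \<longrightarrow> (\<exists>x. \<forall>p\<in>P. \<forall>e>0. eventually (\<lambda>y. p (y - x) < e) F))"

definition unitary_elem :: "'a::cstar_alg1 \<Rightarrow> bool" where
  "unitary_elem u \<longleftrightarrow> astar u * u = 1 \<and> u * astar u = 1"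

definition hnorm :: "'h::chilbert \<Rightarrow> real" where
  "hnorm x = sqrt (Re (cinner x x))"

definition bounded_op :: "('h::chilbert \<Rightarrow> 'k::chilbert) \<Rightarrow> bool" where
  "bounded_op T \<longleftrightarrow>
     (\<forall>x y. T (x + y) = T x + T y) \<and> (\<forall>c x. T (scaleC c x) = scaleC c (T x)) \<and>
     (\<exists>C. \<forall>x. hnorm (T x) \<le> C * hnorm x)"

definition adj :: "('h::chilbert \<Rightarrow> 'k::chilbert) \<Rightarrow> ('k \<Rightarrow> 'h)" where
  "adj T = (THE S. \<forall>x y. cinner (T x) y = cinner x (S y))"

definition unitary_op :: "('k::chilbert \<Rightarrow> 'k) \<Rightarrow> bool" where
  "unitary_op U \<longleftrightarrow> bounded_op U \<and> (\<forall>x y. cinner (U x) (U y) = cinner x y) \<and> surj U"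

definition cont_lin_map ::
  "('a::cstar_alg1 \<Rightarrow> real) set \<Rightarrow> ('a \<Rightarrow> 'h::chilbert \<Rightarrow> 'h) \<Rightarrow> bool" where
  "cont_lin_map P \<phi> \<longleftrightarrow>
     (\<forall>a. bounded_op (\<phi> a)) \<and>
     (\<forall>a b. \<phi> (a + b) = (\<lambda>x. \<phi> a x + \<phi> b x)) \<and>
     (\<forall>c a. \<phi> (scaleC c a) = (\<lambda>x. scaleC c (\<phi> a x))) \<and>
     (\<exists>p\<in>P. \<exists>C. \<forall>a x. hnorm (\<phi> a x) \<le> C * p a * hnorm x)"

definition representation ::
  "('a::cstar_alg1 \<Rightarrow> real) set \<Rightarrow> ('a \<Rightarrow> 'k::chilbert \<Rightarrow> 'k) \<Rightarrow> bool" where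
  "representation P \<Phi> \<longleftrightarrow>
     cont_lin_map P \<Phi> \<and>
     (\<forall>a b. \<Phi> (a * b) = \<Phi> a \<circ> \<Phi> b) \<and>
     (\<forall>a. \<Phi> (astar a) = adj (\<Phi> a))"

text \<open>Complete positivity of
  [a_ij] \<mapsto> [\<rho>_ij(a_ij)] on M_n(A): for every m, every positive element
  c = b* b of M_m(M_n(A)) (entries indexed by pairs (s,i), s<m, 1\<le>i\<le>n)
  is mapped to a positive operator on H^(mn).\<close>
definition cnpos ::
  "('a::cstar_alg1 \<Rightarrow> real) set \<Rightarrow> nat \<Rightarrow> (nat \<Rightarrow> nat \<Rightarrow> 'a \<Rightarrow> 'h::chilbert \<Rightarrow> 'h) \<Rightarrow> bool" where
  "cnpos P n \<rho> \<longleftrightarrow>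
     (\<forall>i\<in>{1..n}. \<forall>j\<in>{1..n}. cont_lin_map P (\<rho> i j)) \<and>
     (\<forall>(m::nat) (b::nat \<Rightarrow> nat \<Rightarrow> nat \<Rightarrow> nat \<Rightarrow> 'a) (\<xi>::nat \<Rightarrow> nat \<Rightarrow> 'h).
        let c = (\<lambda>s i t j. \<Sum>r<m. \<Sum>k\<in>{1..n}. astar (b r k s i) * b r k t j);
            z = (\<Sum>s<m. \<Sum>i\<in>{1..n}. \<Sum>t<m. \<Sum>j\<in>{1..n}.
                   cinner (\<xi> s i) (\<rho> i j (c s i t j) (\<xi> t j)))
        in 0 \<le> Re z \<and> Im z = 0)"

definition pure_cnpos ::
  "('a::cstar_alg1 \<Rightarrow> real) set \<Rightarrow> nat \<Rightarrow> (nat \<Rightarrow> nat \<Rightarrow> 'a \<Rightarrow> 'h::chilbert \<Rightarrow> 'h) \<Rightarrow> bool" where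
  "pure_cnpos P n \<rho> \<longleftrightarrow>
     cnpos P n \<rho> \<and>
     (\<forall>\<theta>. cnpos P n \<theta> \<and> cnpos P n (\<lambda>i j a x. \<rho> i j a x - \<theta> i j a x) \<longrightarrow>
        (\<exists>\<alpha>::real. 0 \<le> \<alpha> \<and> \<alpha> \<le> 1 \<and>
           (\<forall>i\<in>{1..n}. \<forall>j\<in>{1..n}. \<forall>a.
              \<theta> i j a = (\<lambda>x. scaleC (complex_of_real \<alpha>) (\<rho> i j a x)))))"

abbreviation cpos where "cpos P \<phi> \<equiv> cnpos P 1 (\<lambda>_ _. \<phi>)"
abbreviation pure_cp where "pure_cp P \<phi> \<equiv> pure_cnpos P 1 (\<lambda>_ _. \<phi>)"

definition stinespring ::
  "('a::cstar_alg1 \<Rightarrow> real) set \<Rightarrow> ('a \<Rightarrow> 'h::chilbert \<Rightarrow> 'h)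
   \<Rightarrow> ('a \<Rightarrow> 'k::chilbert \<Rightarrow> 'k) \<Rightarrow> ('h \<Rightarrow> 'k) \<Rightarrow> bool" where
  "stinespring P \<phi> \<Phi> V \<longleftrightarrow>
     representation P \<Phi> \<and> bounded_op V \<and>
     (\<forall>a. \<phi> a = adj V \<circ> \<Phi> a \<circ> V) \<and>
     (\<forall>y. \<forall>e>0. \<exists>(N::nat) c a \<xi>.
        hnorm (y - (\<Sum>l<N. scaleC (c l) (\<Phi> (a l) (V (\<xi> l))))) < e)"

text \<open>Two completely positive maps are unitarily equivalent if the
  representations of their Stinespring representations are unitarily
  equivalent; the Stinespring Hilbert space is realised on the type 'k.\<close>
definition cp_unit_equiv ::
  "('a::cstar_alg1 \<Rightarrow> real) set \<Rightarrow> 'k::chilbert itself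
   \<Rightarrow> ('a \<Rightarrow> 'h::chilbert \<Rightarrow> 'h) \<Rightarrow> ('a \<Rightarrow> 'h \<Rightarrow> 'h) \<Rightarrow> bool" where
  "cp_unit_equiv P K \<phi> \<psi> \<longleftrightarrow>
     (\<exists>(\<Phi>1::'a \<Rightarrow> 'k \<Rightarrow> 'k) V1 (\<Phi>2::'a \<Rightarrow> 'k \<Rightarrow> 'k) V2 U.
        stinespring P \<phi> \<Phi>1 V1 \<and> stinespring P \<psi> \<Phi>2 V2 \<and>
        unitary_op U \<and> (\<forall>a. U \<circ> \<Phi>1 a = \<Phi>2 a \<circ> U))"

end

theory Submission
  imports Defs
begin

text \<open>Write \<rho>_ij(a) = V_i* \<Phi>(a) V_j in a Stinespring representation. As \<rho>_jj(1) = id and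
  \<rho>_ij(u_ij) = id with u_ij unitary, the vector V_j \<xi> - \<Phi>(u_ij*) V_i \<xi> has length zero for
  i \<noteq> j. For \<theta> \<le> \<rho> the corresponding quantity for \<theta> lies between 0 and the one for \<rho>, so
  it vanishes as well, and Cauchy-Schwarz yields \<theta>_kj(b) = \<theta>_ki(b u_ij*), and likewise for \<rho>.
  Hence each row of \<theta> is determined by its diagonal entry, which is \<alpha>_k \<rho>_kk by purity of
  \<rho>_kk, so \<theta>_kj = \<alpha>_k \<rho>_kj. Finally, \<theta>_jk(u_jk) = \<alpha>_j id is the adjoint of
  \<theta>_kj(u_jk*) = \<alpha>_k id, so all \<alpha>_k coincide.\<close>

lemma cinner_zero_right [simp]: "cinner (x::'a::chilbert) 0 = 0"
proof -
  have "cinner x (0::'a) = cinner x 0 + cinner x 0"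
    by (metis add_0 cinner_add_right)
  then show ?thesis by simp
qed

lemma cinner_zero_left [simp]: "cinner 0 (x::'a::chilbert) = 0"
  by (subst cinner_commute) simp

lemma cinner_scaleC_left [simp]: "cinner (scaleC c x) (y::'a::chilbert) = cnj c * cinner x y"
  by (subst cinner_commute) (simp add: cinner_scaleC_right cinner_commute[of x y])

lemma cinner_diff_right: "cinner (x::'a::chilbert) (y - z) = cinner x y - cinner x z"
  by (metis add_diff_cancel_left' cinner_add_right diff_add_cancel)

lemma cinner_ext:
  assumes "\<And>\<eta>. cinner \<eta> x = cinner \<eta> (y::'a::chilbert)"
  shows "x = y"
proof -
  have "cinner (x - y) (x - y) = 0" using assms by (simp add: cinner_diff_right)
  then show ?thesis by (simp add: cinner_eq_zero)
qed

lemma astar_one [simp]: "astar (1::'a::cstar_alg1) = 1"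
  by (metis astar_astar astar_mult mult_1_left)

lemma bounded_op_zero: "bounded_op T \<Longrightarrow> T 0 = 0"
  unfolding bounded_op_def by (metis add_0 add_left_imp_eq add_0_right)

lemma bounded_op_scaleC: "bounded_op T \<Longrightarrow> T (scaleC c x) = scaleC c (T x)"
  unfolding bounded_op_def by blast

lemma cnpos_bounded_op:
  assumes "cnpos P n \<sigma>" "i \<in> {1..n}" "j \<in> {1..n}"
  shows "bounded_op (\<sigma> i j a)"
  using assms unfolding cnpos_def cont_lin_map_def by blast

lemma cnpos_single_block_nonneg:
  fixes \<sigma> :: "nat \<Rightarrow> nat \<Rightarrow> 'a::cstar_alg1 \<Rightarrow> 'h::chilbert \<Rightarrow> 'h"
    and b :: "nat \<Rightarrow> nat \<Rightarrow> 'a" and \<xi> :: "nat \<Rightarrow> 'h"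
  assumes cp: "cnpos P n \<sigma>" and I: "\<And>s. s < m \<Longrightarrow> I s \<in> {1..n}"
  defines "z \<equiv> \<Sum>s<m. \<Sum>t<m. cinner (\<xi> s) (\<sigma> (I s) (I t) (\<Sum>r<m. astar (b r s) * b r t) (\<xi> t))"
  shows "0 \<le> Re z \<and> Im z = 0"
proof -
  define B where "B r k s i = (if k = 1 \<and> i = I s then b r s else 0)" for r k s i :: nat
  define X where "X s i = (if i = I s then \<xi> s else 0)" for s i
  define c where "c s i t j = (\<Sum>r<m. \<Sum>k\<in>{1..n}. astar (B r k s i) * B r k t j)" for s i t j
  have c: "c s (I s) t (I t) = (\<Sum>r<m. astar (b r s) * b r t)" if "s < m" for s t
  proof -
    have "1 \<in> {1..n}" using I[OF that] by simp
    then show ?thesis unfolding c_def B_def by (simp add: if_distrib cong: if_cong)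
  qed
  have block: "cinner (X s i) (\<sigma> i j (c s i t j) (X t j)) =
      (if i = I s then if j = I t then cinner (\<xi> s) (\<sigma> (I s) (I t) (c s (I s) t (I t)) (\<xi> t))
       else 0 else 0)"
    if "i \<in> {1..n}" "j \<in> {1..n}" for s t i j
    using bounded_op_zero[OF cnpos_bounded_op[OF cp that]] unfolding X_def by auto
  have "(\<Sum>s<m. \<Sum>i\<in>{1..n}. \<Sum>t<m. \<Sum>j\<in>{1..n}. cinner (X s i) (\<sigma> i j (c s i t j) (X t j)))
      = (\<Sum>s<m. \<Sum>t<m. \<Sum>i\<in>{1..n}. \<Sum>j\<in>{1..n}. cinner (X s i) (\<sigma> i j (c s i t j) (X t j)))"
    (is "?S = _") by (intro sum.cong refl sum.swap)
  also have "\<dots> = z"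
    unfolding z_def
  proof (intro sum.cong refl)
    fix s t assume st: "s \<in> {..<m}" "t \<in> {..<m}"
    have "(\<Sum>i\<in>{1..n}. \<Sum>j\<in>{1..n}. cinner (X s i) (\<sigma> i j (c s i t j) (X t j)))
        = (\<Sum>i\<in>{1..n}. \<Sum>j\<in>{1..n}. if i = I s then if j = I t then
             cinner (\<xi> s) (\<sigma> (I s) (I t) (c s (I s) t (I t)) (\<xi> t)) else 0 else 0)"
      by (intro sum.cong refl block)
    also have "\<dots> = (\<Sum>i\<in>{1..n}. if i = I s then \<Sum>j\<in>{1..n}. if j = I t then
             cinner (\<xi> s) (\<sigma> (I s) (I t) (c s (I s) t (I t)) (\<xi> t)) else 0 else 0)"
      by (intro sum.cong refl) simp
    also have "\<dots> = cinner (\<xi> s) (\<sigma> (I s) (I t) (\<Sum>r<m. astar (b r s) * b r t) (\<xi> t))"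
      using st I by (simp add: c)
    finally show "(\<Sum>i\<in>{1..n}. \<Sum>j\<in>{1..n}. cinner (X s i) (\<sigma> i j (c s i t j) (X t j)))
        = cinner (\<xi> s) (\<sigma> (I s) (I t) (\<Sum>r<m. astar (b r s) * b r t) (\<xi> t))" .
  qed
  finally have "?S = z" .
  moreover have "0 \<le> Re ?S \<and> Im ?S = 0"
    using spec[OF spec[OF spec[OF conjunct2[OF cp[unfolded cnpos_def]], of m], of B], of X]
    unfolding Let_def c_def by (simp only:)
  ultimately show ?thesis by simp
qed

lemma cnpos_diag_entry:
  fixes \<sigma> :: "nat \<Rightarrow> nat \<Rightarrow> 'a::cstar_alg1 \<Rightarrow> 'h::chilbert \<Rightarrow> 'h"
  assumes cp: "cnpos P n \<sigma>" and k: "k \<in> {1..n}"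
  shows "cpos P (\<sigma> k k)"
  unfolding cnpos_def Let_def
  apply (rule conjI)
  subgoal using cp k unfolding cnpos_def by blast
  apply (intro allI)
  subgoal for m b \<xi>
    using cnpos_single_block_nonneg[OF cp, where I="\<lambda>_. k" and b="\<lambda>r s. b r 1 s 1"
        and \<xi>="\<lambda>s. \<xi> s 1" and m=m] k
    by simp
  done

text \<open>In a Stinespring representation this is the squared length of
  \<Sum>s<m. \<Phi>(a s) V_(I s) (\<xi> s).\<close>
definition gram_form ::
  "(nat \<Rightarrow> nat \<Rightarrow> 'a::cstar_alg1 \<Rightarrow> 'h::chilbert \<Rightarrow> 'h) \<Rightarrow> nat \<Rightarrow> (nat \<Rightarrow> nat)
   \<Rightarrow> (nat \<Rightarrow> 'a) \<Rightarrow> (nat \<Rightarrow> 'h) \<Rightarrow> complex" where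
  "gram_form \<sigma> m I a \<xi> =
     (\<Sum>s<m. \<Sum>t<m. cinner (\<xi> s) (\<sigma> (I s) (I t) (astar (a s) * a t) (\<xi> t)))"

lemma gram_form_nonneg:
  assumes "cnpos P n \<sigma>" and "\<And>s. s < m \<Longrightarrow> I s \<in> {1..n}"
  shows "0 \<le> Re (gram_form \<sigma> m I a \<xi>) \<and> Im (gram_form \<sigma> m I a \<xi>) = 0"
proof -
  have "(\<Sum>r<m. astar (if r = 0 then a s else 0) * (if r = 0 then a t else 0)) = astar (a s) * a t"
    if "s < m" for s t
    using that by (simp add: if_distrib cong: if_cong)
  then have "gram_form \<sigma> m I a \<xi> = (\<Sum>s<m. \<Sum>t<m. cinner (\<xi> s) (\<sigma> (I s) (I t)
      (\<Sum>r<m. astar (if r = 0 then a s else 0) * (if r = 0 then a t else 0)) (\<xi> t)))"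
    unfolding gram_form_def by (intro sum.cong refl) simp
  then show ?thesis
    using cnpos_single_block_nonneg[OF assms, where b="\<lambda>r s. if r = 0 then a s else 0"] by simp
qed

lemma gram_form_1: "gram_form \<sigma> 1 I a \<xi> = cinner (\<xi> 0) (\<sigma> (I 0) (I 0) (astar (a 0) * a 0) (\<xi> 0))"
  unfolding gram_form_def by simp

lemma gram_form_2: "gram_form \<sigma> 2 I a \<xi> =
   cinner (\<xi> 0) (\<sigma> (I 0) (I 0) (astar (a 0) * a 0) (\<xi> 0)) +
   cinner (\<xi> 0) (\<sigma> (I 0) (I 1) (astar (a 0) * a 1) (\<xi> 1)) +
   cinner (\<xi> 1) (\<sigma> (I 1) (I 0) (astar (a 1) * a 0) (\<xi> 0)) +
   cinner (\<xi> 1) (\<sigma> (I 1) (I 1) (astar (a 1) * a 1) (\<xi> 1))"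
  unfolding gram_form_def by (simp add: numeral_2_eq_2 lessThan_Suc algebra_simps)

lemma gram_form_3: "gram_form \<sigma> 3 I a \<xi> =
   (\<Sum>s\<in>{0,1,2}. \<Sum>t\<in>{0,1,2}. cinner (\<xi> s) (\<sigma> (I s) (I t) (astar (a s) * a t) (\<xi> t)))"
proof -
  have "{..<3::nat} = {0,1,2}" by auto
  then show ?thesis unfolding gram_form_def by simp
qed

lemma cnpos_scaleC:
  assumes "cnpos P n \<sigma>" "i \<in> {1..n}" "j \<in> {1..n}"
  shows "\<sigma> i j a (scaleC c x) = scaleC c (\<sigma> i j a x)"
  using bounded_op_scaleC[OF cnpos_bounded_op[OF assms]] .

lemma cnpos_cinner_adjoint:
  fixes \<sigma> :: "nat \<Rightarrow> nat \<Rightarrow> 'a::cstar_alg1 \<Rightarrow> 'h::chilbert \<Rightarrow> 'h"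
  assumes cp: "cnpos P n \<sigma>" and ij: "i \<in> {1..n}" "j \<in> {1..n}"
  shows "cinner \<xi> (\<sigma> i j a \<eta>) = cnj (cinner \<eta> (\<sigma> j i (astar a) \<xi>))"
proof -
  define g where "g = cinner \<xi> (\<sigma> i j a \<eta>)"
  define h where "h = cinner \<eta> (\<sigma> j i (astar a) \<xi>)"
  define d1 where "d1 = cinner \<xi> (\<sigma> i i 1 \<xi>)"
  define d2 where "d2 = cinner \<eta> (\<sigma> j j (astar a * a) \<eta>)"
  have "gram_form \<sigma> 2 (\<lambda>l. if l = 0 then i else j) (\<lambda>l. if l = 0 then 1 else a)
      (\<lambda>l. if l = 0 then \<xi> else scaleC c \<eta>) = d1 + c * g + cnj c * h + cnj c * c * d2" for c
    unfolding gram_form_2 g_def h_def d1_def d2_def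
    using ij by (simp add: cnpos_scaleC[OF cp] cinner_scaleC_right mult.assoc)
  then have real: "Im (d1 + c * g + cnj c * h + cnj c * c * d2) = 0" for c
    using gram_form_nonneg[OF cp, of 2 "\<lambda>l. if l = 0 then i else j"] ij by metis
  have "Im d1 = 0"
    using gram_form_nonneg[OF cp, of 1 "\<lambda>_. i" "\<lambda>_. 1" "\<lambda>_. \<xi>"] ij
    unfolding gram_form_1 d1_def by auto
  moreover have "Im d2 = 0"
    using gram_form_nonneg[OF cp, of 1 "\<lambda>_. j" "\<lambda>_. a" "\<lambda>_. \<eta>"] ij
    unfolding gram_form_1 d2_def by auto
  ultimately have "Im g + Im h = 0" "Re g - Re h = 0"
    using real[of 1] real[of \<i>] by simp_all
  then show ?thesis unfolding g_def h_def by (simp add: complex_eq_iff)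
qed

lemma bounded_below_Re_mult_eq_zero:
  fixes g :: complex
  assumes "\<And>c. 0 \<le> d + Re (c * g)"
  shows "g = 0"
proof (rule ccontr)
  assume "g \<noteq> 0"
  then have "Re ((- complex_of_real (\<bar>d\<bar> + 1) / g) * g) = - (\<bar>d\<bar> + 1)"
    by simp
  then show False
    using assms[of "- complex_of_real (\<bar>d\<bar> + 1) / g"] by linarith
qed

text \<open>The gram_form of 1 \<otimes> \<xi> in block j and w \<otimes> -\<xi> in block i, i.e. the squared length
  of V_j \<xi> - \<Phi>(w) V_i \<xi>.\<close>
definition shift_defect ::
  "(nat \<Rightarrow> nat \<Rightarrow> 'a::cstar_alg1 \<Rightarrow> 'h::chilbert \<Rightarrow> 'h) \<Rightarrow> nat \<Rightarrow> nat \<Rightarrow> 'a \<Rightarrow> 'h \<Rightarrow> complex" where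
  "shift_defect \<sigma> i j w \<xi> =
     cinner \<xi> (\<sigma> j j 1 \<xi>) - cinner \<xi> (\<sigma> j i w \<xi>) - cinner \<xi> (\<sigma> i j (astar w) \<xi>)
     + cinner \<xi> (\<sigma> i i (astar w * w) \<xi>)"

lemma gram_form_shift_defect:
  assumes "cnpos P n \<sigma>" "i \<in> {1..n}" "j \<in> {1..n}"
  shows "gram_form \<sigma> 2 (\<lambda>l. if l = 0 then j else i) (\<lambda>l. if l = 0 then 1 else w)
           (\<lambda>l. if l = 0 then \<xi> else scaleC (-1) \<xi>) = shift_defect \<sigma> i j w \<xi>"
  unfolding gram_form_2 shift_defect_def
  using assms by (simp add: cnpos_scaleC[OF assms(1)] cinner_scaleC_right)

lemma shift_defect_nonneg:
  assumes "cnpos P n \<sigma>" "i \<in> {1..n}" "j \<in> {1..n}"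
  shows "0 \<le> Re (shift_defect \<sigma> i j w \<xi>) \<and> Im (shift_defect \<sigma> i j w \<xi>) = 0"
  using gram_form_nonneg[OF assms(1), of 2 "\<lambda>l. if l = 0 then j else i"] assms
  unfolding gram_form_shift_defect[OF assms, symmetric] by metis

lemma shift_defect_diff:
  "shift_defect (\<lambda>i j a x. \<rho> i j a x - \<theta> i j a x) i j w \<xi>
     = shift_defect \<rho> i j w \<xi> - shift_defect \<theta> i j w \<xi>"
  unfolding shift_defect_def by (simp add: cinner_diff_right)

lemma shift_defect_eq_zero_if_dominated:
  assumes "cnpos P n \<theta>" "cnpos P n (\<lambda>i j a x. \<rho> i j a x - \<theta> i j a x)"
    and "i \<in> {1..n}" "j \<in> {1..n}" "shift_defect \<rho> i j w \<xi> = 0"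
  shows "shift_defect \<theta> i j w \<xi> = 0"
  using shift_defect_nonneg[OF assms(1,3,4), of w \<xi>] shift_defect_nonneg[OF assms(2,3,4), of w \<xi>]
    assms(5) unfolding shift_defect_diff by (simp add: complex_eq_iff)

text \<open>Cauchy-Schwarz: the null vector V_j \<xi> - \<Phi>(w) V_i \<xi> is orthogonal to \<Phi>(b*) V_k \<eta>.
  The three-vector gram_form stands in for the Stinespring space.\<close>
lemma cnpos_shift:
  fixes \<sigma> :: "nat \<Rightarrow> nat \<Rightarrow> 'a::cstar_alg1 \<Rightarrow> 'h::chilbert \<Rightarrow> 'h"
  assumes cp: "cnpos P n \<sigma>" and ijk: "i \<in> {1..n}" "j \<in> {1..n}" "k \<in> {1..n}"
    and null: "\<And>\<xi>. shift_defect \<sigma> i j w \<xi> = 0"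
  shows "\<sigma> k j b = \<sigma> k i (b * w)"
proof (intro ext cinner_ext)
  fix \<xi> \<eta>
  define g where "g = cinner \<eta> (\<sigma> k j b \<xi>) - cinner \<eta> (\<sigma> k i (b * w) \<xi>)"
  define d where "d = cinner \<eta> (\<sigma> k k (b * astar b) \<eta>)"
  define I where "I l = (if l = 0 then k else if l = 1 then j else i)" for l :: nat
  define a where "a l = (if l = 0 then astar b else if l = 1 then 1 else w)" for l :: nat
  define v where "v c l = (if l = 0 then \<eta> else if l = 1 then scaleC c \<xi> else scaleC (- c) \<xi>)"
    for c and l :: nat
  have adj: "cinner \<xi> (\<sigma> j k (astar b) \<eta>) = cnj (cinner \<eta> (\<sigma> k j b \<xi>))"
    "cinner \<xi> (\<sigma> i k (astar w * astar b) \<eta>) = cnj (cinner \<eta> (\<sigma> k i (b * w) \<xi>))"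
    using cnpos_cinner_adjoint[OF cp ijk(2,3)] cnpos_cinner_adjoint[OF cp ijk(1,3)]
    by (simp_all add: astar_astar astar_mult)
  have "gram_form \<sigma> 3 I a (v c) = d + c * g + cnj c * cnj g + cnj c * c * shift_defect \<sigma> i j w \<xi>"
    for c
    unfolding gram_form_3 d_def g_def shift_defect_def I_def a_def v_def using ijk
    by (simp add: cnpos_scaleC[OF cp] cinner_scaleC_right astar_astar adj algebra_simps)
  moreover have "0 \<le> Re (gram_form \<sigma> 3 I a (v c))" for c
    using gram_form_nonneg[OF cp] ijk unfolding I_def by simp
  ultimately have bounded_below: "0 \<le> Re d + Re ((2 * c) * g)" for c
    using null by (simp add: algebra_simps)
  then have "g = 0"
    by (intro bounded_below_Re_mult_eq_zero[of "Re d"]) (use bounded_below[of "c / 2" for c] in simp)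
  then show "cinner \<eta> (\<sigma> k j b \<xi>) = cinner \<eta> (\<sigma> k i (b * w) \<xi>)"
    unfolding g_def by simp
qed

lemma shift_defect_unitary:
  assumes cp: "cnpos P n \<rho>" and ij: "i \<in> {1..n}" "j \<in> {1..n}"
    and unital: "\<rho> i i 1 = id" "\<rho> j j 1 = id"
    and u: "u * astar u = 1" "\<rho> i j u = id"
  shows "shift_defect \<rho> i j (astar u) \<xi> = 0"
proof -
  have "cinner \<xi> (\<rho> j i (astar u) \<xi>) = cnj (cinner \<xi> \<xi>)"
    using cnpos_cinner_adjoint[OF cp ij(2,1), of \<xi> "astar u" \<xi>] u by (simp add: astar_astar)
  moreover have "cnj (cinner \<xi> \<xi>) = cinner \<xi> \<xi>"
    by (metis cinner_commute)
  ultimately show ?thesis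
    unfolding shift_defect_def using unital u by (simp add: astar_astar)
qed

lemma pure_cp_dominated_diag:
  assumes "pure_cp P (\<rho> k k)" and "k \<in> {1..n}"
    and "cnpos P n \<theta>" and "cnpos P n (\<lambda>i j a x. \<rho> i j a x - \<theta> i j a x)"
  shows "\<exists>\<alpha>::real. 0 \<le> \<alpha> \<and> \<alpha> \<le> 1 \<and> \<theta> k k = (\<lambda>a x. scaleC (complex_of_real \<alpha>) (\<rho> k k a x))"
proof -
  have "cpos P (\<theta> k k)" "cpos P (\<lambda>a x. \<rho> k k a x - \<theta> k k a x)"
    using cnpos_diag_entry[OF assms(3,2)] cnpos_diag_entry[OF assms(4,2)] by simp_all
  then show ?thesis
    using assms(1) unfolding pure_cnpos_def by (fastforce dest!: spec[of _ "\<lambda>_ _. \<theta> k k"])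
qed

lemma dominated_row_scalar:
  assumes cp: "cnpos P n \<rho>" and "cnpos P n \<theta>" and "cnpos P n (\<lambda>i j a x. \<rho> i j a x - \<theta> i j a x)"
    and kj: "k \<in> {1..n}" "j \<in> {1..n}"
    and unital: "\<rho> k k 1 = id" "\<rho> j j 1 = id"
    and u: "u * astar u = 1" "\<rho> k j u = id"
    and diag: "\<theta> k k = (\<lambda>a x. scaleC \<alpha> (\<rho> k k a x))"
  shows "\<theta> k j = (\<lambda>a x. scaleC \<alpha> (\<rho> k j a x))"
proof
  fix a
  have null: "shift_defect \<rho> k j (astar u) \<xi> = 0" for \<xi>
    using shift_defect_unitary[OF cp kj unital u] .
  have "\<theta> k j a = \<theta> k k (a * astar u)"
    using cnpos_shift[OF assms(2) kj(1,2,1)] shift_defect_eq_zero_if_dominated[OF assms(2,3) kj null]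
    by blast
  also have "\<dots> = (\<lambda>x. scaleC \<alpha> (\<rho> k k (a * astar u) x))"
    using diag by simp
  also have "\<rho> k k (a * astar u) = \<rho> k j a"
    using cnpos_shift[OF cp kj(1,2,1) null] by simp
  finally show "\<theta> k j a = (\<lambda>x. scaleC \<alpha> (\<rho> k j a x))" .
qed

lemma dominated_scalars_agree:
  fixes \<rho> :: "nat \<Rightarrow> nat \<Rightarrow> 'a::cstar_alg1 \<Rightarrow> 'h::chilbert \<Rightarrow> 'h" and \<alpha> \<beta> :: real
  assumes cp: "cnpos P n \<rho>" and "cnpos P n \<theta>" and jk: "j \<in> {1..n}" "k \<in> {1..n}"
    and u: "\<rho> j k u = id"
    and rows: "\<theta> k j = (\<lambda>a x. scaleC \<alpha> (\<rho> k j a x))" "\<theta> j k = (\<lambda>a x. scaleC \<beta> (\<rho> j k a x))"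
  shows "scaleC \<alpha> \<eta> = scaleC \<beta> (\<eta>::'h)"
proof (rule cinner_ext)
  fix \<xi> :: 'h
  have "cinner \<xi> (scaleC \<alpha> \<eta>) = \<alpha> * cnj (cinner \<eta> (\<rho> k j (astar u) \<xi>))"
    using cnpos_cinner_adjoint[OF cp jk, of \<xi> u \<eta>] u by (simp add: cinner_scaleC_right)
  also have "\<dots> = cnj (cinner \<eta> (\<theta> k j (astar u) \<xi>))"
    using rows(1) by (simp add: cinner_scaleC_right)
  also have "\<dots> = cinner \<xi> (\<theta> j k u \<eta>)"
    using cnpos_cinner_adjoint[OF assms(2) jk, of \<xi> u \<eta>] by simp
  also have "\<dots> = cinner \<xi> (scaleC \<beta> \<eta>)"
    using rows(2) u by simp
  finally show "cinner \<xi> (scaleC \<alpha> \<eta>) = cinner \<xi> (scaleC \<beta> \<eta>)" .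
qed

lemma dominated_rows_common_scalar:
  fixes \<rho> \<theta> :: "nat \<Rightarrow> nat \<Rightarrow> 'a::cstar_alg1 \<Rightarrow> 'h::chilbert \<Rightarrow> 'h" and \<alpha> :: "nat \<Rightarrow> real"
  assumes cp: "cnpos P n \<rho>" and \<theta>: "cnpos P n \<theta>"
    and dom: "cnpos P n (\<lambda>i j a x. \<rho> i j a x - \<theta> i j a x)"
    and unital: "\<And>k. k \<in> {1..n} \<Longrightarrow> \<rho> k k 1 = id"
    and u: "\<And>i j. i \<in> {1..n} \<Longrightarrow> j \<in> {1..n} \<Longrightarrow> i \<noteq> j \<Longrightarrow>
      unitary_elem (u i j) \<and> \<rho> i j (u i j) = id"
    and diag: "\<And>k. k \<in> {1..n} \<Longrightarrow> \<theta> k k = (\<lambda>a x. scaleC (\<alpha> k) (\<rho> k k a x))"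
    and ijl: "i \<in> {1..n}" "j \<in> {1..n}" "l \<in> {1..n}"
  shows "\<theta> i j = (\<lambda>a x. scaleC (\<alpha> l) (\<rho> i j a x))"
proof -
  have row: "\<theta> k j = (\<lambda>a x. scaleC (\<alpha> k) (\<rho> k j a x))" if kj: "k \<in> {1..n}" "j \<in> {1..n}" for k j
  proof (cases "k = j")
    case False
    with u[OF kj] have "u k j * astar (u k j) = 1" "\<rho> k j (u k j) = id"
      unfolding unitary_elem_def by auto
    then show ?thesis
      using dominated_row_scalar[OF cp \<theta> dom kj unital[OF kj(1)] unital[OF kj(2)]] diag[OF kj(1)]
      by blast
  qed (use diag[OF kj(1)] in simp)
  have "scaleC (\<alpha> i) x = scaleC (\<alpha> l) x" for x :: 'h
  proof (cases "i = l")
    case False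
    with u[OF ijl(3,1)] have "\<rho> l i (u l i) = id" by auto
    then show ?thesis
      using dominated_scalars_agree[OF cp \<theta> ijl(3,1) _ row[OF ijl(1,3)] row[OF ijl(3,1)]] by simp
  qed simp
  then show ?thesis
    unfolding row[OF ijl(1,2)] by simp
qed

theorem lemma4p1:
  fixes P :: "('a::cstar_alg1 \<Rightarrow> real) set"
    and n :: nat
    and \<rho> :: "nat \<Rightarrow> nat \<Rightarrow> 'a \<Rightarrow> 'h::chilbert \<Rightarrow> 'h"
    and u :: "nat \<Rightarrow> nat \<Rightarrow> 'a"
  assumes "pro_cstar P"
    and "cnpos P n \<rho>"
    and "\<forall>i\<in>{1..n}. pure_cp P (\<rho> i i) \<and> \<rho> i i 1 = id"
    and "\<forall>i\<in>{1..n}. \<forall>j\<in>{1..n}. cp_unit_equiv P TYPE('k::chilbert) (\<rho> i i) (\<rho> j j)"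
    and "\<forall>i\<in>{1..n}. \<forall>j\<in>{1..n}. i \<noteq> j \<longrightarrow> unitary_elem (u i j) \<and> \<rho> i j (u i j) = id"
  shows "pure_cnpos P n \<rho>"
  unfolding pure_cnpos_def
proof (intro conjI allI impI)
  show "cnpos P n \<rho>" by fact
  fix \<theta> assume "cnpos P n \<theta> \<and> cnpos P n (\<lambda>i j a x. \<rho> i j a x - \<theta> i j a x)"
  then have \<theta>: "cnpos P n \<theta>" and dom: "cnpos P n (\<lambda>i j a x. \<rho> i j a x - \<theta> i j a x)"
    by auto
  obtain \<alpha> :: "nat \<Rightarrow> real" where \<alpha>: "\<And>k. k \<in> {1..n} \<Longrightarrow>
      0 \<le> \<alpha> k \<and> \<alpha> k \<le> 1 \<and> \<theta> k k = (\<lambda>a x. scaleC (\<alpha> k) (\<rho> k k a x))"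
    using pure_cp_dominated_diag[OF _ _ \<theta> dom] assms(3) by metis
  have rows: "\<theta> i j = (\<lambda>a x. scaleC (\<alpha> 1) (\<rho> i j a x))" if "i \<in> {1..n}" "j \<in> {1..n}" "1 \<in> {1..n}" for i j
  proof (rule dominated_rows_common_scalar[where u=u, OF assms(2) \<theta> dom _ _ _ that])
    show "\<rho> k k 1 = id" "\<theta> k k = (\<lambda>a x. scaleC (\<alpha> k) (\<rho> k k a x))" if "k \<in> {1..n}" for k
      using assms(3) \<alpha> that by auto
  qed (use assms(5) in auto)
  show "\<exists>\<alpha>::real. 0 \<le> \<alpha> \<and> \<alpha> \<le> 1 \<and>
      (\<forall>i\<in>{1..n}. \<forall>j\<in>{1..n}. \<forall>a. \<theta> i j a = (\<lambda>x. scaleC (complex_of_real \<alpha>) (\<rho> i j a x)))"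
  proof (cases "n = 0")
    case False
    then show ?thesis
      using \<alpha>[of 1] rows by (intro exI[of _ "\<alpha> 1"]) simp
  qed (intro exI[of _ 0], simp)
qed

end
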